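(* Let $D$ be a tournament missing disjoint paths of length 2 and let $C=a_1b_1c_1,\dots,a_kb_kc_k$ be a double cycle in $\Delta(D)$. Then for all $i\in\{1,\dots,k\}$, with $H=D[K(C)]$: (1) $N^{++}_H(a_i)=N^{++}_H(c_i)$; (2) $N^{--}_H(a_i)=N^{--}_H(c_i)$.
   Context: All digraphs are finite oriented graphs; $D[X]$ is the induced subdigraph. $N^+_H(v)$, $N^-_H(v)$ are out/in-neighborhoods in $H$; $N^{++}_H(v)$ is the set of vertices $w\notin N_H^+(v)\cup\{v\}$ with $u\to w$ in $H$ for some $u\in N_H^+(v)$, and $N^{--}_H(v)$ is the set of vertices $w\notin N_H^-(v)\cup\{v\}$ with $w\to u$ in $H$ for some $u\in N_H^-(v)$. A missing edge is a pair of distinct non-adjacent vertices; the missing graph is formed by the missing edges. $D$ is a tournament missing disjoint paths of length 2 if its missing graph is a vertex-disjoint union of paths each with exactly two edges. For missing edges $\{x,y\},\{a,b\}$, $\{x,y\}$ loses to $\{a,b\}$ (written $xy\to ab$) if the endpoints can be labelled so that $x\to a$, $b\notin N^+(x)\cup N^{++}(x)$, $y\to b$, $a\notin N^+(y)\cup N^{++}(y)$ (neighborhoods in $D$). $\Delta(D)$ has the missing edges as vertices and arcs $(e,e')$ whenever $e$ loses to $e'$. For missing paths $abc$, $xyz$, $abc\to xyz$ means each of $ab,bc$ loses to each of $xy,yz$. A double cycle is a sequence $C=a_1b_1c_1,\dots,a_kb_kc_k$ ($k\ge2$) of distinct missing paths of length 2 (components of the missing graph, edges $a_ib_i,b_ic_i$)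 with $a_ib_ic_i\to a_{i+1}b_{i+1}c_{i+1}$ for all $i$, indices modulo $k$. $K(C)=\{a_i,b_i,c_i:1\le i\le k\}$. *)

theory Defs
  imports Main
begin

text \<open>A digraph is given by a vertex set V and an arc predicate A (A x y means x -> y).\<close>

definition oriented_graph :: "'a set \<Rightarrow> ('a \<Rightarrow> 'a \<Rightarrow> bool) \<Rightarrow> bool" where
  "oriented_graph V A \<longleftrightarrow> finite V \<and>
     (\<forall>x y. A x y \<longrightarrow> x \<in> V \<and> y \<in> V \<and> x \<noteq> y) \<and>
     (\<forall>x y. A x y \<longrightarrow> \<not> A y x)"

text \<open>Neighbourhoods inside the induced subdigraph on S (S = V gives neighbourhoods in D).\<close>
definition outN :: "('a \<Rightarrow> 'a \<Rightarrow> bool) \<Rightarrow> 'a set \<Rightarrow> 'a \<Rightarrow> 'a set" where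
  "outN A S v = {w \<in> S. A v w}"

definition inN :: "('a \<Rightarrow> 'a \<Rightarrow> bool) \<Rightarrow> 'a set \<Rightarrow> 'a \<Rightarrow> 'a set" where
  "inN A S v = {w \<in> S. A w v}"

definition out2N :: "('a \<Rightarrow> 'a \<Rightarrow> bool) \<Rightarrow> 'a set \<Rightarrow> 'a \<Rightarrow> 'a set" where
  "out2N A S v = {w \<in> S. w \<notin> outN A S v \<union> {v} \<and> (\<exists>u \<in> outN A S v. A u w)}"

definition in2N :: "('a \<Rightarrow> 'a \<Rightarrow> bool) \<Rightarrow> 'a set \<Rightarrow> 'a \<Rightarrow> 'a set" where
  "in2N A S v = {w \<in> S. w \<notin> inN A S v \<union> {v} \<and> (\<exists>u \<in> inN A S v. A w u)}"

definition missing :: "'a set \<Rightarrow> ('a \<Rightarrow> 'a \<Rightarrow> bool) \<Rightarrow> 'a \<Rightarrow> 'a \<Rightarrow> bool" where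
  "missing V A x y \<longleftrightarrow> x \<in> V \<and> y \<in> V \<and> x \<noteq> y \<and> \<not> A x y \<and> \<not> A y x"

text \<open>a b c is a component of the missing graph which is a path with edges ab, bc.\<close>
definition missing_path :: "'a set \<Rightarrow> ('a \<Rightarrow> 'a \<Rightarrow> bool) \<Rightarrow> 'a \<Rightarrow> 'a \<Rightarrow> 'a \<Rightarrow> bool" where
  "missing_path V A a b c \<longleftrightarrow>
     missing V A a b \<and> missing V A b c \<and> a \<noteq> c \<and> \<not> missing V A a c \<and>
     {y. missing V A a y} = {b} \<and> {y. missing V A b y} = {a, c} \<and> {y. missing V A c y} = {b}"

definition tournament_missing_P3s :: "'a set \<Rightarrow> ('a \<Rightarrow> 'a \<Rightarrow> bool) \<Rightarrow> bool" where
  "tournament_missing_P3s V A \<longleftrightarrow> oriented_graph V A \<and>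
     (\<forall>x y. missing V A x y \<longrightarrow>
        (\<exists>a b c. missing_path V A a b c \<and> ({x, y} = {a, b} \<or> {x, y} = {b, c})))"

text \<open>Ordered version: with labelling x,y,a,b the missing edge {x,y} loses to {a,b}.\<close>
definition loses_lab :: "'a set \<Rightarrow> ('a \<Rightarrow> 'a \<Rightarrow> bool) \<Rightarrow> 'a \<Rightarrow> 'a \<Rightarrow> 'a \<Rightarrow> 'a \<Rightarrow> bool" where
  "loses_lab V A x y a b \<longleftrightarrow>
     A x a \<and> b \<notin> outN A V x \<union> out2N A V x \<and>
     A y b \<and> a \<notin> outN A V y \<union> out2N A V y"

text \<open>Arc (e, e') of Delta(D): e, e' missing edges and e loses to e'.\<close>
definition loses :: "'a set \<Rightarrow> ('a \<Rightarrow> 'a \<Rightarrow> bool) \<Rightarrow> 'a set \<Rightarrow> 'a set \<Rightarrow> bool" where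
  "loses V A e e' \<longleftrightarrow>
     (\<exists>x y a b. e = {x, y} \<and> e' = {a, b} \<and> missing V A x y \<and> missing V A a b \<and>
                loses_lab V A x y a b)"

definition path_loses :: "'a set \<Rightarrow> ('a \<Rightarrow> 'a \<Rightarrow> bool) \<Rightarrow> 'a \<Rightarrow> 'a \<Rightarrow> 'a \<Rightarrow> 'a \<Rightarrow> 'a \<Rightarrow> 'a \<Rightarrow> bool" where
  "path_loses V A a b c x y z \<longleftrightarrow>
     (\<forall>e \<in> {{a, b}, {b, c}}. \<forall>e' \<in> {{x, y}, {y, z}}. loses V A e e')"

text \<open>Double cycle, 0-indexed: paths a i b i c i for i < k, indices mod k.\<close>
definition double_cycle :: "'a set \<Rightarrow> ('a \<Rightarrow> 'a \<Rightarrow> bool) \<Rightarrow> nat \<Rightarrow>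
    (nat \<Rightarrow> 'a) \<Rightarrow> (nat \<Rightarrow> 'a) \<Rightarrow> (nat \<Rightarrow> 'a) \<Rightarrow> bool" where
  "double_cycle V A k a b c \<longleftrightarrow> k \<ge> 2 \<and>
     (\<forall>i < k. missing_path V A (a i) (b i) (c i)) \<and>
     (\<forall>i < k. \<forall>j < k. i \<noteq> j \<longrightarrow> {a i, b i, c i} \<noteq> {a j, b j, c j}) \<and>
     (\<forall>i < k. path_loses V A (a i) (b i) (c i)
                (a (Suc i mod k)) (b (Suc i mod k)) (c (Suc i mod k)))"

definition K_of :: "nat \<Rightarrow> (nat \<Rightarrow> 'a) \<Rightarrow> (nat \<Rightarrow> 'a) \<Rightarrow> (nat \<Rightarrow> 'a) \<Rightarrow> 'a set" where
  "K_of k a b c = (\<Union>i < k. {a i, b i, c i})"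

end

theory Submission
  imports Defs
begin

text \<open>
  Call \<open>b\<^sub>m\<close> the middle and \<open>a\<^sub>m, c\<^sub>m\<close> the ends of the missing path \<open>P\<^sub>m\<close>; vertices of
  distinct paths of the cycle are adjacent. Because both missing edges of \<open>P\<^sub>m\<close> lose to both
  missing edges of \<open>P\<^sub>m\<^sub>+\<^sub>1\<close>, each \<open>u \<in> P\<^sub>m\<close> is at distance more than two from a vertex of
  \<open>P\<^sub>m\<^sub>+\<^sub>1\<close>, which is the middle or an end depending on whether \<open>u\<close> is the middle and on the
  direction of the arc between \<open>b\<^sub>m\<close> and \<open>b\<^sub>m\<^sub>+\<^sub>1\<close>. That vertex must dominate everything further
  along the cycle that \<open>u\<close> dominates, so by induction an arc from \<open>P\<^sub>m\<close> to \<open>P\<^sub>m\<^sub>+\<^sub>n\<close> joins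
  vertices of the same type (middle or end) exactly when an odd number of the arcs between
  consecutive middles \<open>b\<^sub>m, \<dots>, b\<^sub>m\<^sub>+\<^sub>n\<close> point forward. Around the whole cycle this number is odd,
  which rules out paths \<open>a\<^sub>i \<rightarrow> w \<rightarrow> c\<^sub>i\<close> and \<open>c\<^sub>i \<rightarrow> w \<rightarrow> a\<^sub>i\<close> with \<open>w\<close> in another path.
  Hence \<open>a\<^sub>i\<close> and \<open>c\<^sub>i\<close> are adjacent twins in \<open>H\<close>, and twins have equal second neighbourhoods.
\<close>

lemma out2N_eq_of_twins:
  assumes asym: "\<And>u v. A u v \<Longrightarrow> \<not> A v u"
    and adjacent: "A x y \<or> A y x"
    and twins: "\<And>w. w \<in> S \<Longrightarrow> w \<noteq> x \<Longrightarrow> w \<noteq> y \<Longrightarrow> A x w \<longleftrightarrow> A y w"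
  shows "out2N A S x = out2N A S y"
  using adjacent unfolding out2N_def outN_def
  by (auto; metis asym twins)

lemma in2N_eq_out2N_converse: "in2N A S v = out2N (\<lambda>x y. A y x) S v"
  unfolding in2N_def out2N_def inN_def outN_def ..

lemma in2N_eq_of_twins:
  assumes "\<And>u v. A u v \<Longrightarrow> \<not> A v u"
    and "A x y \<or> A y x"
    and "\<And>w. w \<in> S \<Longrightarrow> w \<noteq> x \<Longrightarrow> w \<noteq> y \<Longrightarrow> A w x \<longleftrightarrow> A w y"
  shows "in2N A S x = in2N A S y"
  unfolding in2N_eq_out2N_converse using assms by (intro out2N_eq_of_twins) auto

definition unreachable2 :: "'a set \<Rightarrow> ('a \<Rightarrow> 'a \<Rightarrow> bool) \<Rightarrow> 'a \<Rightarrow> 'a \<Rightarrow> bool" where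
  "unreachable2 V A u v \<longleftrightarrow> v \<notin> outN A V u \<union> out2N A V u"

lemma unreachable2_no_arc: "oriented_graph V A \<Longrightarrow> unreachable2 V A u v \<Longrightarrow> \<not> A u v"
  unfolding unreachable2_def outN_def oriented_graph_def by auto

lemma unreachable2_no_path2:
  "oriented_graph V A \<Longrightarrow> unreachable2 V A u v \<Longrightarrow> A u x \<Longrightarrow> \<not> A x v"
  unfolding unreachable2_def outN_def out2N_def oriented_graph_def by blast

lemma loses_unreachable2_of_arc:
  assumes "oriented_graph V A" and "loses V A {p, q} {r, s}" and "A q s"
  shows "unreachable2 V A p s \<and> unreachable2 V A q r"
  using assms unfolding loses_def loses_lab_def unreachable2_def oriented_graph_def missing_def
  by (auto simp: doubleton_eq_iff outN_def)

lemma loses_unreachable2_of_reverse_arc: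
  assumes "oriented_graph V A" and "loses V A {p, q} {r, s}" and "A s q"
  shows "unreachable2 V A p r \<and> unreachable2 V A q s"
  using assms unfolding loses_def loses_lab_def unreachable2_def oriented_graph_def missing_def
  by (auto simp: doubleton_eq_iff outN_def)

lemma missing_path_eq_of_common_vertex:
  assumes "missing_path V A x y z" "missing_path V A x' y' z'"
    and "t \<in> {x, y, z}" "t \<in> {x', y', z'}"
  shows "{x, y, z} = {x', y', z'}"
  using assms unfolding missing_path_def
  by (smt (verit) doubleton_eq_iff insert_commute singleton_insert_inj_eq' insert_iff empty_iff)

fun xor_run :: "(nat \<Rightarrow> bool) \<Rightarrow> nat \<Rightarrow> nat \<Rightarrow> bool" where
  "xor_run g m 0 = False"
| "xor_run g m (Suc n) = (g m \<noteq> xor_run g (Suc m) n)"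

lemma xor_run_add: "xor_run g m (n\<^sub>1 + n\<^sub>2) = (xor_run g m n\<^sub>1 \<noteq> xor_run g (m + n\<^sub>1) n\<^sub>2)"
  by (induction n\<^sub>1 arbitrary: m) auto

lemma xor_run_mod:
  assumes periodic: "\<And>m. g m = g (m mod k)"
  shows "xor_run g m n = xor_run g (m mod k) n"
proof (induction n arbitrary: m)
  case (Suc n)
  have "xor_run g (Suc m) n = xor_run g (Suc (m mod k)) n"
    using Suc.IH[of "Suc m"] Suc.IH[of "Suc (m mod k)"] by (simp add: mod_Suc_eq)
  then show ?case using periodic[of m] by simp
qed simp

lemma add_mod_neq_self:
  fixes m n k :: nat
  assumes "m < k" "0 < n" "n < k"
  shows "(m + n) mod k \<noteq> m"
proof (cases "m + n < k")
  case False
  then have "(m + n) mod k = m + n - k"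
    using assms by (simp add: le_mod_geq)
  then show ?thesis
    using assms False by linarith
qed (use assms in simp)

locale tournament_double_cycle =
  fixes V :: "'a set" and A :: "'a \<Rightarrow> 'a \<Rightarrow> bool"
    and k :: nat and a b c :: "nat \<Rightarrow> 'a"
  assumes tournament: "tournament_missing_P3s V A"
    and cycle: "double_cycle V A k a b c"
begin

definition vpath :: "nat \<Rightarrow> 'a set" where
  "vpath m = {a m, b m, c m}"

definition middles_forward :: "nat \<Rightarrow> bool" where
  "middles_forward m \<longleftrightarrow> A (b (m mod k)) (b (Suc m mod k))"

lemma oriented: "oriented_graph V A"
  using tournament unfolding tournament_missing_P3s_def by auto

lemma asym: "A u v \<Longrightarrow> \<not> A v u"
  using oriented unfolding oriented_graph_def by auto

lemma two_le_k: "2 \<le> k"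
  using cycle unfolding double_cycle_def by auto

lemma is_missing_path: "m < k \<Longrightarrow> missing_path V A (a m) (b m) (c m)"
  using cycle unfolding double_cycle_def by auto

lemma vpath_subset: "m < k \<Longrightarrow> vpath m \<subseteq> V"
  using is_missing_path[of m] unfolding vpath_def missing_path_def missing_def by auto

lemma vpath_distinct: "m < k \<Longrightarrow> a m \<noteq> b m \<and> b m \<noteq> c m \<and> a m \<noteq> c m"
  using is_missing_path[of m] unfolding missing_path_def missing_def by auto

lemma vpath_disjoint:
  assumes "m < k" "m' < k" "m \<noteq> m'"
  shows "vpath m \<inter> vpath m' = {}"
proof (rule ccontr)
  assume "vpath m \<inter> vpath m' \<noteq> {}"
  then have "vpath m = vpath m'"
    using missing_path_eq_of_common_vertex[OF is_missing_path[OF assms(1)] is_missing_path[OF assms(2)]]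
    unfolding vpath_def by blast
  then show False
    using cycle assms unfolding double_cycle_def vpath_def by auto
qed

lemma vpath_cross_adjacent:
  assumes "m < k" "m' < k" "m \<noteq> m'" "u \<in> vpath m" "v \<in> vpath m'"
  shows "A u v \<or> A v u"
proof (rule ccontr)
  assume "\<not> (A u v \<or> A v u)"
  moreover have "u \<noteq> v" "u \<in> V" "v \<in> V"
    using assms vpath_disjoint vpath_subset by auto
  ultimately have "missing V A u v"
    unfolding missing_def by auto
  then have "v \<in> vpath m"
    using is_missing_path[of m] assms unfolding missing_path_def vpath_def by auto
  then show False
    using assms vpath_disjoint by auto
qed

lemma successor_unreachable2:
  assumes m: "m < k" and u: "u \<in> vpath m" and v: "v \<in> vpath (Suc m mod k)"
    and v_type: "(v = b (Suc m mod k)) \<longleftrightarrow> ((u = b m) \<noteq> middles_forward m)"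
  shows "unreachable2 V A u v"
proof -
  define m' where "m' = Suc m mod k"
  have m': "m' < k" "m' \<noteq> m"
    using two_le_k m unfolding m'_def by (auto simp: mod_Suc)
  have "path_loses V A (a m) (b m) (c m) (a m') (b m') (c m')"
    using cycle m unfolding double_cycle_def m'_def by auto
  then have loses:
    "loses V A {a m, b m} {a m', b m'}" "loses V A {a m, b m} {c m', b m'}"
    "loses V A {c m, b m} {a m', b m'}" "loses V A {c m, b m} {c m', b m'}"
    unfolding path_loses_def by (auto simp: insert_commute)
  have forward: "middles_forward m \<longleftrightarrow> A (b m) (b m')"
    unfolding middles_forward_def m'_def using m by auto
  note distinct = vpath_distinct[OF m] vpath_distinct[OF m'(1)]
  show ?thesis
  proof (cases "A (b m) (b m')")
    case True
    note loses_unreachable2_of_arc[OF oriented loses(1) True]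
      loses_unreachable2_of_arc[OF oriented loses(2) True]
      loses_unreachable2_of_arc[OF oriented loses(3) True]
      loses_unreachable2_of_arc[OF oriented loses(4) True]
    then show ?thesis
      using u v v_type forward True distinct unfolding vpath_def m'_def[symmetric] by auto
  next
    case False
    then have backward: "A (b m') (b m)"
      using vpath_cross_adjacent[OF m m'(1) m'(2)[symmetric], of "b m" "b m'"]
      unfolding vpath_def by auto
    note loses_unreachable2_of_reverse_arc[OF oriented loses(1) backward]
      loses_unreachable2_of_reverse_arc[OF oriented loses(2) backward]
      loses_unreachable2_of_reverse_arc[OF oriented loses(3) backward]
      loses_unreachable2_of_reverse_arc[OF oriented loses(4) backward]
    then show ?thesis
      using u v v_type forward False distinct unfolding vpath_def m'_def[symmetric] by auto
  qed
qed

lemma xor_run_middles_forward_mod: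
  "xor_run middles_forward m n = xor_run middles_forward (m mod k) n"
  by (rule xor_run_mod) (simp add: middles_forward_def mod_Suc_eq)

lemma vpath_vertex_of_type:
  "m < k \<Longrightarrow> \<exists>v \<in> vpath m. (v = b m) \<longleftrightarrow> t"
  using vpath_distinct[of m] unfolding vpath_def by (cases t) auto

text \<open>
  The inductive step: the vertex \<open>v\<close> of the next path that \<open>u\<close> cannot reach within two
  steps is adjacent to \<open>w\<close>, and \<open>w \<rightarrow> v\<close> would give the path \<open>u \<rightarrow> w \<rightarrow> v\<close>, so \<open>v \<rightarrow> w\<close>.
\<close>
lemma arc_type_parity:
  assumes "0 < n" "n < k" "m < k" "u \<in> vpath m" "w \<in> vpath ((m + n) mod k)" "A u w"
  shows "(w = b ((m + n) mod k)) \<longleftrightarrow> ((u = b m) \<longleftrightarrow> xor_run middles_forward m n)"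
  using assms
proof (induction n arbitrary: m u)
  case 0
  then show ?case by simp
next
  case (Suc n)
  define m' where "m' = Suc m mod k"
  have m': "m' < k"
    using Suc.prems unfolding m'_def by auto
  show ?case
  proof (cases "n = 0")
    case True
    show ?thesis
    proof (rule ccontr)
      assume "\<not> ?thesis"
      then have "unreachable2 V A u w"
        using successor_unreachable2[OF Suc.prems(3,4), of w] Suc.prems(5) True by auto
      then show False
        using unreachable2_no_arc[OF oriented] Suc.prems(6) by auto
    qed
  next
    case False
    obtain v where v: "v \<in> vpath m'" and v_type: "(v = b m') \<longleftrightarrow> ((u = b m) \<noteq> middles_forward m)"
      using vpath_vertex_of_type[OF m'] by blast
    have "unreachable2 V A u v"
      using successor_unreachable2[OF Suc.prems(3,4)] v v_type unfolding m'_def by simp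
    then have not_wv: "\<not> A w v"
      using unreachable2_no_path2[OF oriented] Suc.prems(6) by blast
    define j where "j = (m' + n) mod k"
    have j: "j = (m + Suc n) mod k" "j < k"
      unfolding j_def m'_def using Suc.prems by (auto simp: mod_add_left_eq)
    have "j \<noteq> m'"
      unfolding j_def using add_mod_neq_self[OF m'] False Suc.prems by auto
    then have "A v w"
      using vpath_cross_adjacent[OF m' j(2) _ v] Suc.prems(5) not_wv unfolding j by auto
    then have "(w = b j) \<longleftrightarrow> ((v = b m') \<longleftrightarrow> xor_run middles_forward m' n)"
      using Suc.IH[OF _ _ m' v] False Suc.prems(2,5) j unfolding j_def by auto
    moreover have "xor_run middles_forward (Suc m) n = xor_run middles_forward m' n"
      unfolding m'_def using xor_run_middles_forward_mod by simp
    ultimately show ?thesis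
      using v_type j(1) by auto
  qed
qed

text \<open>
  Take \<open>w \<in> P\<^sub>i\<close> unable to reach \<open>a\<^sub>i\<^sub>+\<^sub>1\<close>; then \<open>a\<^sub>i\<^sub>+\<^sub>1 \<rightarrow> w\<close> is an arc that travels \<open>k - 1\<close> steps
  forward, and the type rule for it closes the parity around the cycle.
\<close>
lemma xor_run_middles_forward_cycle: "i < k \<Longrightarrow> xor_run middles_forward i k"
proof -
  assume i: "i < k"
  define i' where "i' = Suc i mod k"
  have i': "i' < k" "i' \<noteq> i"
    using i two_le_k unfolding i'_def by (auto simp: mod_Suc)
  obtain w where w: "w \<in> vpath i" and w_type: "(w = b i) \<longleftrightarrow> middles_forward i"
    using vpath_vertex_of_type[OF i] by blast
  have "unreachable2 V A w (a i')"
    using successor_unreachable2[OF i w, of "a i'"] w_type vpath_distinct[OF i'(1)]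
    unfolding i'_def vpath_def by auto
  then have "A (a i') w"
    using vpath_cross_adjacent[OF i i'(1) i'(2)[symmetric] w] unreachable2_no_arc[OF oriented]
    unfolding vpath_def by auto
  moreover have "(i' + (k - 1)) mod k = i"
  proof -
    have "(i' + (k - 1)) mod k = (Suc i + (k - 1)) mod k"
      unfolding i'_def by (simp add: mod_add_left_eq)
    also have "Suc i + (k - 1) = i + k"
      using two_le_k by simp
    finally show ?thesis
      using i by simp
  qed
  ultimately have "(w = b i) \<longleftrightarrow> ((a i' = b i') \<longleftrightarrow> xor_run middles_forward i' (k - 1))"
    using arc_type_parity[of "k - 1" i' "a i'" w] two_le_k i' w unfolding vpath_def by auto
  then have "middles_forward i \<noteq> xor_run middles_forward (Suc i) (k - 1)"
    using w_type vpath_distinct[OF i'(1)] xor_run_middles_forward_mod unfolding i'_def by auto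
  moreover have "k = Suc (k - 1)"
    using two_le_k by simp
  ultimately show ?thesis
    by (metis xor_run.simps(2))
qed

lemma no_path2_between_ends:
  assumes i: "i < k" and e: "e \<in> {a i, c i}" and e': "e' \<in> {a i, c i}"
    and j: "j < k" "j \<noteq> i" and w: "w \<in> vpath j" and "A e w" "A w e'"
  shows False
proof -
  define n\<^sub>1 where "n\<^sub>1 = (if i < j then j - i else j + k - i)"
  define n\<^sub>2 where "n\<^sub>2 = k - n\<^sub>1"
  have n\<^sub>1: "0 < n\<^sub>1" "n\<^sub>1 < k" "(i + n\<^sub>1) mod k = j"
    unfolding n\<^sub>1_def using i j by auto
  have n\<^sub>2: "0 < n\<^sub>2" "n\<^sub>2 < k" "(j + n\<^sub>2) mod k = i" "n\<^sub>1 + n\<^sub>2 = k"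
    unfolding n\<^sub>2_def n\<^sub>1_def using i j by auto
  have ends: "e \<in> vpath i" "e' \<in> vpath i" "e \<noteq> b i" "e' \<noteq> b i"
    using e e' vpath_distinct[OF i] unfolding vpath_def by auto
  have "(w = b j) \<longleftrightarrow> ((e = b i) \<longleftrightarrow> xor_run middles_forward i n\<^sub>1)"
    using arc_type_parity[OF n\<^sub>1(1,2) i ends(1), unfolded n\<^sub>1(3), OF w \<open>A e w\<close>] .
  moreover have "(e' = b i) \<longleftrightarrow> ((w = b j) \<longleftrightarrow> xor_run middles_forward j n\<^sub>2)"
    using arc_type_parity[OF n\<^sub>2(1,2) j(1) w, unfolded n\<^sub>2(3), OF ends(2) \<open>A w e'\<close>] .
  moreover have "xor_run middles_forward i k
      \<longleftrightarrow> (xor_run middles_forward i n\<^sub>1 \<noteq> xor_run middles_forward j n\<^sub>2)"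
    using xor_run_add[of middles_forward i n\<^sub>1 n\<^sub>2] xor_run_middles_forward_mod[of "i + n\<^sub>1" n\<^sub>2]
    by (simp add: n\<^sub>1(3) n\<^sub>2(4))
  ultimately show False
    using xor_run_middles_forward_cycle[OF i] ends(3,4) by simp
qed

lemma ends_twins:
  assumes i: "i < k" and w: "w \<in> K_of k a b c" "w \<noteq> a i" "w \<noteq> c i"
  shows "(A (a i) w \<longleftrightarrow> A (c i) w) \<and> (A w (a i) \<longleftrightarrow> A w (c i))"
proof -
  obtain j where j: "j < k" and wj: "w \<in> vpath j"
    using w unfolding K_of_def vpath_def by auto
  show ?thesis
  proof (cases "j = i")
    case True
    then have "w = b i"
      using wj w unfolding vpath_def by auto
    then show ?thesis
      using is_missing_path[OF i] unfolding missing_path_def missing_def by auto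
  next
    case False
    have "A (a i) w \<or> A w (a i)" "A (c i) w \<or> A w (c i)"
      using vpath_cross_adjacent[OF i j False[symmetric] _ wj] unfolding vpath_def by auto
    moreover have "\<not> (A (a i) w \<and> A w (c i))" "\<not> (A (c i) w \<and> A w (a i))"
      using no_path2_between_ends[OF i _ _ j False wj] by blast+
    ultimately show ?thesis
      using asym by blast
  qed
qed

lemma ends_adjacent: "i < k \<Longrightarrow> A (a i) (c i) \<or> A (c i) (a i)"
  using is_missing_path[of i] vpath_subset[of i]
  unfolding missing_path_def missing_def vpath_def by auto

end

theorem lemma4p9:
  fixes V :: "'a set" and A :: "'a \<Rightarrow> 'a \<Rightarrow> bool"
    and k :: nat and a b c :: "nat \<Rightarrow> 'a"
  assumes "tournament_missing_P3s V A"
    and "double_cycle V A k a b c"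
    and "i < k"
  shows "out2N A (K_of k a b c) (a i) = out2N A (K_of k a b c) (c i)
       \<and> in2N A (K_of k a b c) (a i) = in2N A (K_of k a b c) (c i)"
proof -
  interpret tournament_double_cycle V A k a b c
    using assms(1,2) by unfold_locales
  show ?thesis
    using out2N_eq_of_twins[of A, OF asym ends_adjacent[OF assms(3)]]
      in2N_eq_of_twins[of A, OF asym ends_adjacent[OF assms(3)]]
      ends_twins[OF assms(3)]
    by blast
qed

end
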